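(* Let $S$ be a simplicial poset, $\mu\colon E(S)\to\mathbb{Z}_+$ an edge multiplicity function, $I\in S$, and $c_I\colon E(I)\to\mathbb{Z}_+$ with $c_I(e)\in\{1,\dots,\mu(e)\}$. Then \[ \mathrm{lk}_{S_\mu}(I,c_I)\cong(\mathrm{lk}_S I)_{\tilde\mu,\tilde\nu}, \] where $\tilde\mu=\mu\circ\mathrm{rest}\colon E(\mathrm{lk}_S I)\to\mathbb{Z}_+$, and $\tilde\nu\colon V(\mathrm{lk}_S I)\to\mathbb{Z}_+$ is given by $\tilde\nu(J)=\prod_{e\in E(J)\setminus E(I)}\mu(e)$ for each $J>I$ with $\dim J=\dim I+1$.
   Context: A finite poset $S$ is a simplicial poset if for every $I\in S$ the lower set $S_{\leqslant I}$ is isomorphic to the poset of nonempty faces of a $k$-simplex; $k=\dim I$. $V(X)$, $E(X)$ denote the sets of vertices (dimension 0) and edges (dimension 1) of $X$ or below $X$; every subset of $V(J)$ is the vertex set of a unique element $\leqslant J$. $\mathrm{lk}_S I=S_{>I}$, a simplicial poset whose vertices are the $J>I$ with $\dim J=\dim I+1$ and whose edges are the $J>I$ with $\dim J=\dim I+2$. The map $\mathrm{rest}\colon E(\mathrm{lk}_SI)\to E(S)$ sends such $J$ to the unique edge of $S$ below $J$ with vertex set $V(J)\setminus V(I)$. Edge inflation: $S_\mu$ is the poset of pairs $(I,c_I)$, $c_I\colon E(I)\to\mathbb{Z}_+$, $c_I(e)\in\{1,\dots,\mu(e)\}$, ordered by $(I,c_I)<(J,c_J)$ iff $I<J$ and $c_I=c_J|_{E(I)}$.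 For a simplicial poset $L$ with edge function $\mu\colon E(L)\to\mathbb{Z}_+$ and vertex function $\nu\colon V(L)\to\mathbb{Z}_+$, $L_{\mu,\nu}$ is the poset of triples $(J,d_J,c_J)$ with $J\in L$, $d_J\colon V(J)\to\mathbb{Z}_+$, $d_J(v)\in\{1,\dots,\nu(v)\}$, $c_J\colon E(J)\to\mathbb{Z}_+$, $c_J(e)\in\{1,\dots,\mu(e)\}$, ordered by $(J,d_J,c_J)\leqslant(J',d_{J'},c_{J'})$ iff $J\leqslant J'$, $d_{J'}|_{V(J)}=d_J$ and $c_{J'}|_{E(J)}=c_J$. *)

theory Defs
  imports Main
begin

definition partial_order_on' :: "'a set \<Rightarrow> ('a \<Rightarrow> 'a \<Rightarrow> bool) \<Rightarrow> bool" where
  "partial_order_on' P le \<longleftrightarrow>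
     (\<forall>x\<in>P. le x x) \<and>
     (\<forall>x\<in>P. \<forall>y\<in>P. le x y \<and> le y x \<longrightarrow> x = y) \<and>
     (\<forall>x\<in>P. \<forall>y\<in>P. \<forall>z\<in>P. le x y \<and> le y z \<longrightarrow> le x z)"

definition poset_iso ::
  "'a set \<Rightarrow> ('a \<Rightarrow> 'a \<Rightarrow> bool) \<Rightarrow> 'b set \<Rightarrow> ('b \<Rightarrow> 'b \<Rightarrow> bool) \<Rightarrow> bool" where
  "poset_iso P le Q le' \<longleftrightarrow>
     (\<exists>f. bij_betw f P Q \<and> (\<forall>x\<in>P. \<forall>y\<in>P. le x y \<longleftrightarrow> le' (f x) (f y)))"

definition lower_set :: "'a set \<Rightarrow> ('a \<Rightarrow> 'a \<Rightarrow> bool) \<Rightarrow> 'a \<Rightarrow> 'a set" where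
  "lower_set P le I = {J \<in> P. le J I}"

definition simplex_faces :: "nat \<Rightarrow> nat set set" where
  "simplex_faces k = {B. B \<subseteq> {0..k} \<and> B \<noteq> {}}"

definition simplicial_poset :: "'a set \<Rightarrow> ('a \<Rightarrow> 'a \<Rightarrow> bool) \<Rightarrow> bool" where
  "simplicial_poset P le \<longleftrightarrow> finite P \<and> partial_order_on' P le \<and>
     (\<forall>I\<in>P. \<exists>k. poset_iso (lower_set P le I) le (simplex_faces k) (\<subseteq>))"

definition vertices :: "'a set \<Rightarrow> ('a \<Rightarrow> 'a \<Rightarrow> bool) \<Rightarrow> 'a set" where
  "vertices P le = {v \<in> P. \<forall>u\<in>P. le u v \<longrightarrow> u = v}"

definition Vb :: "'a set \<Rightarrow> ('a \<Rightarrow> 'a \<Rightarrow> bool) \<Rightarrow> 'a \<Rightarrow> 'a set" where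
  "Vb P le X = {v \<in> vertices P le. le v X}"

definition dimp :: "'a set \<Rightarrow> ('a \<Rightarrow> 'a \<Rightarrow> bool) \<Rightarrow> 'a \<Rightarrow> nat" where
  "dimp P le X = card (Vb P le X) - 1"

definition edges :: "'a set \<Rightarrow> ('a \<Rightarrow> 'a \<Rightarrow> bool) \<Rightarrow> 'a set" where
  "edges P le = {e \<in> P. card (Vb P le e) = 2}"

definition Eb :: "'a set \<Rightarrow> ('a \<Rightarrow> 'a \<Rightarrow> bool) \<Rightarrow> 'a \<Rightarrow> 'a set" where
  "Eb P le X = {e \<in> edges P le. le e X}"

definition link :: "'a set \<Rightarrow> ('a \<Rightarrow> 'a \<Rightarrow> bool) \<Rightarrow> 'a \<Rightarrow> 'a set" where
  "link P le I = {J \<in> P. le I J \<and> J \<noteq> I}"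

definition rest :: "'a set \<Rightarrow> ('a \<Rightarrow> 'a \<Rightarrow> bool) \<Rightarrow> 'a \<Rightarrow> 'a \<Rightarrow> 'a" where
  "rest P le I J = (THE e. e \<in> edges P le \<and> le e J \<and> Vb P le e = Vb P le J - Vb P le I)"

text \<open>Edge inflation S_mu. Labelings c_I : E(I) -> Z_+ are represented extensionally
  (value 0 outside E(I)).\<close>
definition inflation :: "'a set \<Rightarrow> ('a \<Rightarrow> 'a \<Rightarrow> bool) \<Rightarrow> ('a \<Rightarrow> nat) \<Rightarrow> ('a \<times> ('a \<Rightarrow> nat)) set" where
  "inflation P le \<mu> = {(I, c). I \<in> P \<and>
      (\<forall>e \<in> Eb P le I. 1 \<le> c e \<and> c e \<le> \<mu> e) \<and> (\<forall>e. e \<notin> Eb P le I \<longrightarrow> c e = 0)}"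

definition inflation_le :: "'a set \<Rightarrow> ('a \<Rightarrow> 'a \<Rightarrow> bool) \<Rightarrow>
    ('a \<times> ('a \<Rightarrow> nat)) \<Rightarrow> ('a \<times> ('a \<Rightarrow> nat)) \<Rightarrow> bool" where
  "inflation_le P le x y \<longleftrightarrow> le (fst x) (fst y) \<and>
      snd x = (\<lambda>e. if e \<in> Eb P le (fst x) then snd y e else 0)"

definition inflation2 :: "'a set \<Rightarrow> ('a \<Rightarrow> 'a \<Rightarrow> bool) \<Rightarrow> ('a \<Rightarrow> nat) \<Rightarrow> ('a \<Rightarrow> nat) \<Rightarrow>
    ('a \<times> ('a \<Rightarrow> nat) \<times> ('a \<Rightarrow> nat)) set" where
  "inflation2 L le \<mu> \<nu> = {(J, d, c). J \<in> L \<and>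
      (\<forall>v \<in> Vb L le J. 1 \<le> d v \<and> d v \<le> \<nu> v) \<and> (\<forall>v. v \<notin> Vb L le J \<longrightarrow> d v = 0) \<and>
      (\<forall>e \<in> Eb L le J. 1 \<le> c e \<and> c e \<le> \<mu> e) \<and> (\<forall>e. e \<notin> Eb L le J \<longrightarrow> c e = 0)}"

definition inflation2_le :: "'a set \<Rightarrow> ('a \<Rightarrow> 'a \<Rightarrow> bool) \<Rightarrow>
    ('a \<times> ('a \<Rightarrow> nat) \<times> ('a \<Rightarrow> nat)) \<Rightarrow> ('a \<times> ('a \<Rightarrow> nat) \<times> ('a \<Rightarrow> nat)) \<Rightarrow> bool" where
  "inflation2_le L le x y \<longleftrightarrow>
     (case x of (J, d, c) \<Rightarrow> case y of (J', d', c') \<Rightarrow>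
        le J J' \<and> d = (\<lambda>v. if v \<in> Vb L le J then d' v else 0) \<and>
        c = (\<lambda>e. if e \<in> Eb L le J then c' e else 0))"

end

theory Submission imports Defs "HOL-Library.FuncSet"
begin

(* A point of the link of (I, cI) in the edge inflation is a face J > I together with a labelling
   c of E(J) extending cI.  Every edge e of J outside I has a vertex a outside I.  If its other
   vertex lies in I, then e lies below exactly one vertex v of lk I below J, namely the face with
   vertex set V(I) + a; otherwise e = rest K for exactly one edge K of lk I below J, namely the face
   with vertex set V(I) + V(e).  Hence c is the same as a labelling of E(v) - E(I) for every vertex
   v of lk I below J, which can be numbered by one of nu(v) values, together with the labels
   c(rest K), which form a (mu o rest)-labelling of the edges of lk I below J.  In both posets the
   order is "J <= J' and the labels of J are restrictions of those of J'", so this bijection is an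
   order isomorphism.  The simplicial structure enters only through the fact that below a fixed
   face the order is inclusion of vertex sets and every nonempty set of its vertices spans a face. *)

section \<open>Labellings\<close>

definition labellings :: "'e set \<Rightarrow> ('e \<Rightarrow> nat) \<Rightarrow> ('e \<Rightarrow> nat) set" where
  "labellings A \<mu> = {c. (\<forall>e\<in>A. 1 \<le> c e \<and> c e \<le> \<mu> e) \<and> (\<forall>e. e \<notin> A \<longrightarrow> c e = 0)}"

lemma bij_betw_labellings_PiE:
  "bij_betw (\<lambda>c. restrict c A) (labellings A \<mu>) (\<Pi>\<^sub>E e\<in>A. {1..\<mu> e})"
  by (rule bij_betw_byWitness[where f' = "\<lambda>g e. if e \<in> A then g e else 0"])
    (auto simp: labellings_def fun_eq_iff PiE_def Pi_def extensional_def)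

lemma card_labellings:
  assumes "finite A"
  shows "card (labellings A \<mu>) = (\<Prod>e\<in>A. \<mu> e)"
proof -
  have "card (labellings A \<mu>) = card (\<Pi>\<^sub>E e\<in>A. {1..\<mu> e})"
    by (rule bij_betw_same_card[OF bij_betw_labellings_PiE])
  also have "\<dots> = (\<Prod>e\<in>A. \<mu> e)"
    by (simp add: card_PiE[OF assms])
  finally show ?thesis .
qed

lemma finite_labellings: "finite A \<Longrightarrow> finite (labellings A \<mu>)"
  using bij_betw_finite[OF bij_betw_labellings_PiE, of A \<mu>] by (simp add: finite_PiE)

lemma ex_bij_betw_labellings_interval:
  "finite A \<Longrightarrow> \<exists>g. bij_betw g (labellings A \<mu>) {1..\<Prod>e\<in>A. \<mu> e}"
  by (simp add: bij_betw_iff_card finite_labellings card_labellings)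

lemma restriction_in_labellings:
  "c \<in> labellings B \<mu> \<Longrightarrow> A \<subseteq> B \<Longrightarrow> (\<lambda>e. if e \<in> A then c e else 0) \<in> labellings A \<mu>"
  by (auto simp: labellings_def)

lemma labelling_eq_restriction_iff:
  "c \<in> labellings A \<mu> \<Longrightarrow> c = (\<lambda>e. if e \<in> A then c' e else 0) \<longleftrightarrow> (\<forall>e\<in>A. c e = c' e)"
  by (auto simp: labellings_def fun_eq_iff)

lemma labellings_eqI:
  "c \<in> labellings A \<mu> \<Longrightarrow> c' \<in> labellings A \<mu> \<Longrightarrow> (\<forall>e\<in>A. c e = c' e) \<Longrightarrow> c = c'"
  by (auto simp: labellings_def fun_eq_iff)

lemma mem_inflation_iff: "(J, c) \<in> inflation P le \<mu> \<longleftrightarrow> J \<in> P \<and> c \<in> labellings (Eb P le J) \<mu>"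
  by (simp add: inflation_def labellings_def)

lemma mem_inflation2_iff:
  "(J, d, c) \<in> inflation2 P le \<mu> \<nu> \<longleftrightarrow>
     J \<in> P \<and> d \<in> labellings (Vb P le J) \<nu> \<and> c \<in> labellings (Eb P le J) \<mu>"
  by (simp add: inflation2_def labellings_def)

lemma inflation_le_iff:
  "c \<in> labellings (Eb P le J) \<mu> \<Longrightarrow>
     inflation_le P le (J, c) (J', c') \<longleftrightarrow> le J J' \<and> (\<forall>e\<in>Eb P le J. c e = c' e)"
  by (simp add: inflation_le_def labelling_eq_restriction_iff)

lemma inflation2_le_iff:
  "d \<in> labellings (Vb P le J) \<nu> \<Longrightarrow> c \<in> labellings (Eb P le J) \<mu> \<Longrightarrow>
     inflation2_le P le (J, d, c) (J', d', c') \<longleftrightarrow>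
       le J J' \<and> (\<forall>v\<in>Vb P le J. d v = d' v) \<and> (\<forall>e\<in>Eb P le J. c e = c' e)"
  by (simp add: inflation2_le_def labelling_eq_restriction_iff)

section \<open>Faces of a simplicial poset\<close>

locale sposet =
  fixes P :: "'a set" and le :: "'a \<Rightarrow> 'a \<Rightarrow> bool"
  assumes simplicial: "simplicial_poset P le"
begin

lemma finite_carrier: "finite P"
  and le_refl: "x \<in> P \<Longrightarrow> le x x"
  and le_antisym: "x \<in> P \<Longrightarrow> y \<in> P \<Longrightarrow> le x y \<Longrightarrow> le y x \<Longrightarrow> x = y"
  and le_trans: "x \<in> P \<Longrightarrow> y \<in> P \<Longrightarrow> z \<in> P \<Longrightarrow> le x y \<Longrightarrow> le y z \<Longrightarrow> le x z"
  using simplicial unfolding simplicial_poset_def partial_order_on'_def by blast+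

lemma Vb_mono:
  assumes "Q \<subseteq> P" "X \<in> Q" "Y \<in> Q" "le X Y"
  shows "Vb Q le X \<subseteq> Vb Q le Y"
  using assms le_trans unfolding Vb_def vertices_def by blast

lemma Eb_mono:
  assumes "Q \<subseteq> P" "X \<in> Q" "Y \<in> Q" "le X Y"
  shows "Eb Q le X \<subseteq> Eb Q le Y"
  using assms le_trans unfolding Eb_def edges_def by blast

lemma finite_Eb: "finite (Eb P le X)"
  using finite_carrier by (rule rev_finite_subset) (auto simp: Eb_def edges_def)

end

locale simplex_chart = sposet +
  fixes J :: 'a and k :: nat and f :: "'a \<Rightarrow> nat set"
  assumes top_in_carrier: "J \<in> P"
    and bij: "bij_betw f (lower_set P le J) (simplex_faces k)"
    and le_iff_subset: "x \<in> lower_set P le J \<Longrightarrow> y \<in> lower_set P le J \<Longrightarrow> le x y \<longleftrightarrow> f x \<subseteq> f y"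
begin

abbreviation D where "D \<equiv> lower_set P le J"

lemma D_iff: "X \<in> D \<longleftrightarrow> X \<in> P \<and> le X J"
  by (simp add: lower_set_def)

lemma top_in_D: "J \<in> D"
  using top_in_carrier le_refl D_iff by blast

lemma below_in_D: "X \<in> D \<Longrightarrow> Y \<in> P \<Longrightarrow> le Y X \<Longrightarrow> Y \<in> D"
  using top_in_carrier le_trans D_iff by blast

lemma Vb_subset_D: "X \<in> D \<Longrightarrow> Vb P le X \<subseteq> D"
  using below_in_D by (auto simp: Vb_def vertices_def)

lemma chart_in_faces: "X \<in> D \<Longrightarrow> f X \<subseteq> {0..k} \<and> f X \<noteq> {}"
  using bij by (auto simp: bij_betw_def simplex_faces_def)

lemma ex_chart_preimage: "B \<subseteq> {0..k} \<Longrightarrow> B \<noteq> {} \<Longrightarrow> \<exists>X\<in>D. f X = B"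
proof -
  assume "B \<subseteq> {0..k}" "B \<noteq> {}"
  then have "B \<in> f ` D"
    using bij_betw_imp_surj_on[OF bij] by (simp add: simplex_faces_def)
  then show ?thesis by blast
qed

lemma chart_inj: "X \<in> D \<Longrightarrow> Y \<in> D \<Longrightarrow> f X = f Y \<Longrightarrow> X = Y"
  using bij by (auto simp: bij_betw_def inj_on_def)

lemma vertex_iff_singleton:
  assumes v: "v \<in> D"
  shows "v \<in> vertices P le \<longleftrightarrow> (\<exists>i. f v = {i})"
proof
  assume vertex: "v \<in> vertices P le"
  obtain i where i: "i \<in> f v"
    using chart_in_faces[OF v] by blast
  then obtain u where u: "u \<in> D" "f u = {i}"
    using ex_chart_preimage[of "{i}"] chart_in_faces[OF v] by blast
  then have "le u v"
    using le_iff_subset[OF u(1) v] i by simp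
  then have "u = v"
    using vertex u(1) D_iff unfolding vertices_def by blast
  with u show "\<exists>i. f v = {i}" by blast
next
  assume "\<exists>i. f v = {i}"
  then obtain i where i: "f v = {i}" ..
  have "u = v" if u: "u \<in> P" "le u v" for u
  proof -
    have "u \<in> D" using below_in_D[OF v u] .
    then have "f u = f v"
      using le_iff_subset[OF _ v] u(2) chart_in_faces i by (metis subset_singleton_iff)
    then show ?thesis using chart_inj \<open>u \<in> D\<close> v by blast
  qed
  then show "v \<in> vertices P le"
    using v D_iff unfolding vertices_def by blast
qed

lemma chart_eq_Union_vertices:
  assumes X: "X \<in> D"
  shows "f X = \<Union> (f ` Vb P le X)"
proof (rule equalityI)
  show "f X \<subseteq> \<Union> (f ` Vb P le X)"
  proof
    fix i assume i: "i \<in> f X"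
    then obtain u where u: "u \<in> D" "f u = {i}"
      using ex_chart_preimage[of "{i}"] chart_in_faces[OF X] by blast
    then have "u \<in> Vb P le X"
      using vertex_iff_singleton le_iff_subset[OF u(1) X] i D_iff by (auto simp: Vb_def)
    with u show "i \<in> \<Union> (f ` Vb P le X)" by blast
  qed
  show "\<Union> (f ` Vb P le X) \<subseteq> f X"
    using le_iff_subset[OF _ X] Vb_subset_D[OF X] by (auto simp: Vb_def)
qed

lemma le_iff_Vb_subset:
  assumes "X \<in> D" "Y \<in> D"
  shows "le X Y \<longleftrightarrow> Vb P le X \<subseteq> Vb P le Y"
proof
  assume "le X Y"
  then show "Vb P le X \<subseteq> Vb P le Y"
    using Vb_mono[of P X Y] assms D_iff by blast
next
  assume "Vb P le X \<subseteq> Vb P le Y"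
  then have "f X \<subseteq> f Y"
    using chart_eq_Union_vertices assms by (metis Union_mono image_mono)
  then show "le X Y"
    using le_iff_subset assms by blast
qed

lemma ex_face_with_Vb:
  assumes A: "A \<subseteq> Vb P le J" "A \<noteq> {}"
  shows "\<exists>X\<in>D. Vb P le X = A"
proof -
  have AD: "A \<subseteq> D"
    using A Vb_subset_D[OF top_in_D] by blast
  have "\<Union> (f ` A) \<subseteq> {0..k}" "\<Union> (f ` A) \<noteq> {}"
    using AD A(2) chart_in_faces by blast+
  then obtain X where X: "X \<in> D" "f X = \<Union> (f ` A)"
    using ex_chart_preimage by blast
  have "Vb P le X \<subseteq> A"
  proof
    fix v assume v: "v \<in> Vb P le X"
    have vD: "v \<in> D" using v Vb_subset_D[OF X(1)] by blast
    then obtain i where i: "f v = {i}"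
      using v vertex_iff_singleton by (auto simp: Vb_def)
    then obtain a where a: "a \<in> A" "i \<in> f a"
      using chart_eq_Union_vertices[OF X(1)] v X(2) by blast
    have "a \<in> vertices P le"
      using a(1) A(1) by (auto simp: Vb_def)
    then obtain j where "f a = {j}"
      using vertex_iff_singleton AD a(1) by blast
    then have "f a = f v" using a i by auto
    then have "a = v"
      using chart_inj AD vD a(1) by blast
    with a(1) show "v \<in> A" by simp
  qed
  moreover have "A \<subseteq> Vb P le X"
    using le_iff_subset[OF _ X(1)] AD A(1) X(2) by (auto simp: Vb_def)
  ultimately show ?thesis using X(1) by blast
qed

lemma Vb_top_nonempty: "Vb P le J \<noteq> {}"
  using chart_eq_Union_vertices[OF top_in_D] chart_in_faces[OF top_in_D] by auto

end

context sposet
begin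

lemma ex_simplex_chart:
  assumes "J \<in> P"
  shows "\<exists>k f. simplex_chart P le J k f"
proof -
  obtain k f where "bij_betw f (lower_set P le J) (simplex_faces k)"
    and "\<forall>x\<in>lower_set P le J. \<forall>y\<in>lower_set P le J. le x y \<longleftrightarrow> f x \<subseteq> f y"
    using simplicial assms unfolding simplicial_poset_def poset_iso_def by blast
  then have "simplex_chart P le J k f"
    unfolding simplex_chart_def simplex_chart_axioms_def sposet_def using simplicial assms by blast
  then show ?thesis by blast
qed

lemma le_iff_Vb_subset:
  assumes "X \<in> P" "Y \<in> P" "J \<in> P" "le X J" "le Y J"
  shows "le X Y \<longleftrightarrow> Vb P le X \<subseteq> Vb P le Y"
proof -
  obtain k f where "simplex_chart P le J k f"
    using ex_simplex_chart[OF assms(3)] by blast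
  then interpret simplex_chart P le J k f .
  show ?thesis using le_iff_Vb_subset D_iff assms by blast
qed

lemma eq_if_Vb_eq:
  assumes "X \<in> P" "Y \<in> P" "J \<in> P" "le X J" "le Y J" "Vb P le X = Vb P le Y"
  shows "X = Y"
  using le_iff_Vb_subset[of X Y J] le_iff_Vb_subset[of Y X J] le_antisym assms by simp

lemma ex_face_with_Vb:
  assumes "J \<in> P" "A \<subseteq> Vb P le J" "A \<noteq> {}"
  shows "\<exists>X\<in>P. le X J \<and> Vb P le X = A"
proof -
  obtain k f where "simplex_chart P le J k f"
    using ex_simplex_chart[OF assms(1)] by blast
  then interpret simplex_chart P le J k f .
  show ?thesis using ex_face_with_Vb D_iff assms by blast
qed

lemma Vb_nonempty:
  assumes "X \<in> P"
  shows "Vb P le X \<noteq> {}"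
proof -
  obtain k f where "simplex_chart P le X k f"
    using ex_simplex_chart[OF assms] by blast
  then interpret simplex_chart P le X k f .
  show ?thesis by (rule Vb_top_nonempty)
qed

end

section \<open>The link of a face\<close>

locale sposet_link = sposet +
  fixes I :: 'a
  assumes base: "I \<in> P"
begin

abbreviation L where "L \<equiv> link P le I"
abbreviation V where "V X \<equiv> Vb P le X"

lemma link_iff: "J \<in> L \<longleftrightarrow> J \<in> P \<and> le I J \<and> J \<noteq> I"
  by (simp add: link_def)

lemma link_subset: "L \<subseteq> P"
  by (auto simp: link_def)

lemma Vb_base_subset: "J \<in> L \<Longrightarrow> V I \<subseteq> V J"
  using Vb_mono[of P I J] base link_iff by blast

lemma Vb_link_diff_nonempty:
  assumes J: "J \<in> L"
  shows "V J - V I \<noteq> {}"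
proof
  assume "V J - V I = {}"
  then have "V J = V I" using Vb_base_subset[OF J] by blast
  then have "J = I"
    using eq_if_Vb_eq[of J I J] J base le_refl link_iff by blast
  with J show False by (simp add: link_iff)
qed

lemma ex_link_face_with_Vb:
  assumes J: "J \<in> L" and A: "V I \<subseteq> A" "A \<subseteq> V J" "A \<noteq> V I"
  shows "\<exists>X\<in>L. le X J \<and> V X = A"
proof -
  have "A \<noteq> {}" using Vb_nonempty[OF base] A by blast
  then obtain X where X: "X \<in> P" "le X J" "V X = A"
    using ex_face_with_Vb[OF _ A(2)] J link_iff by blast
  have "le I X"
    using le_iff_Vb_subset[of I X J] base X J A(1) link_iff by blast
  with X A(3) show ?thesis by (auto simp: link_iff)
qed

lemma link_vertex_iff: "v \<in> vertices L le \<longleftrightarrow> v \<in> L \<and> (\<exists>a. V v - V I = {a})"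
proof
  assume v: "v \<in> vertices L le"
  then have vL: "v \<in> L" and minimal: "\<And>u. u \<in> L \<Longrightarrow> le u v \<Longrightarrow> u = v"
    by (auto simp: vertices_def)
  obtain a where a: "a \<in> V v - V I"
    using Vb_link_diff_nonempty[OF vL] by blast
  obtain X where X: "X \<in> L" "le X v" "V X = V I \<union> {a}"
    using ex_link_face_with_Vb[OF vL, of "V I \<union> {a}"] a Vb_base_subset[OF vL] by blast
  with minimal have "X = v" by blast
  with X a have "V v - V I = {a}" by blast
  with vL show "v \<in> L \<and> (\<exists>a. V v - V I = {a})" by blast
next
  assume "v \<in> L \<and> (\<exists>a. V v - V I = {a})"
  then obtain a where vL: "v \<in> L" and a: "V v - V I = {a}" by blast
  have "u = v" if u: "u \<in> L" "le u v" for u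
  proof -
    have "V u - V I \<subseteq> {a}"
      using Vb_mono[of P u v] u vL link_subset a by blast
    then have "V u - V I = {a}"
      using Vb_link_diff_nonempty[OF u(1)] by blast
    then have "V u = V v"
      using a Vb_base_subset u(1) vL by blast
    then show "u = v"
      using eq_if_Vb_eq[of u v v] u vL link_subset le_refl by blast
  qed
  with vL show "v \<in> vertices L le" by (auto simp: vertices_def)
qed

lemma link_vertexE:
  assumes "v \<in> Vb L le J"
  obtains a where "v \<in> L" "le v J" "V v = insert a (V I)" "a \<notin> V I"
proof -
  from assms have "v \<in> vertices L le" "le v J" by (simp_all add: Vb_def)
  then obtain a where "v \<in> L" "V v - V I = {a}" using link_vertex_iff by blast
  with Vb_base_subset[of v] have "V v = insert a (V I)" "a \<notin> V I" by blast+
  with \<open>v \<in> L\<close> \<open>le v J\<close> show thesis by (rule that)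
qed

lemma card_Vb_link:
  assumes K: "K \<in> L"
  shows "card (Vb L le K) = card (V K - V I)"
proof -
  define new_vertex where "new_vertex v = the_elem (V v - V I)" for v
  have new_vertex: "V v - V I = {new_vertex v}" if "v \<in> Vb L le K" for v
    using that link_vertex_iff unfolding new_vertex_def Vb_def by fastforce
  have below: "v \<in> L" "le v K" if "v \<in> Vb L le K" for v
    using that link_vertex_iff by (auto simp: Vb_def)
  have "inj_on new_vertex (Vb L le K)"
  proof
    fix v w assume v: "v \<in> Vb L le K" and w: "w \<in> Vb L le K"
      and "new_vertex v = new_vertex w"
    then have "V v = V w"
      using new_vertex Vb_base_subset below by (metis Diff_partition)
    then show "v = w"
      using eq_if_Vb_eq[of v w K] below[OF v] below[OF w] K link_subset by blast
  qed
  moreover have "new_vertex ` Vb L le K = V K - V I"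
  proof
    show "new_vertex ` Vb L le K \<subseteq> V K - V I"
      using new_vertex below Vb_mono[of P _ K] K link_subset by blast
    show "V K - V I \<subseteq> new_vertex ` Vb L le K"
    proof
      fix a assume a: "a \<in> V K - V I"
      obtain X where X: "X \<in> L" "le X K" "V X = V I \<union> {a}"
        using ex_link_face_with_Vb[OF K, of "V I \<union> {a}"] a Vb_base_subset[OF K] by blast
      then have "V X - V I = {a}" using a by blast
      then have "X \<in> Vb L le K" "new_vertex X = a"
        using X link_vertex_iff by (auto simp: Vb_def new_vertex_def)
      then show "a \<in> new_vertex ` Vb L le K" by blast
    qed
  qed
  ultimately show ?thesis
    by (metis bij_betw_same_card inj_on_imp_bij_betw)
qed

lemma link_edge_iff: "K \<in> edges L le \<longleftrightarrow> K \<in> L \<and> card (V K - V I) = 2"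
  using card_Vb_link by (auto simp: edges_def)

lemma rest_eqI:
  assumes "K \<in> L" "e \<in> edges P le" "le e K" "V e = V K - V I"
  shows "rest P le I K = e"
  unfolding rest_def
proof (rule the_equality)
  show "e \<in> edges P le \<and> le e K \<and> V e = V K - V I" using assms by blast
  fix e' assume "e' \<in> edges P le \<and> le e' K \<and> V e' = V K - V I"
  then show "e' = e"
    using eq_if_Vb_eq[of e' e K] assms link_subset by (auto simp: edges_def)
qed

lemma rest_in_edges:
  assumes K: "K \<in> edges L le"
  shows "rest P le I K \<in> edges P le" "le (rest P le I K) K" "V (rest P le I K) = V K - V I"
proof -
  have KL: "K \<in> L" and card: "card (V K - V I) = 2"
    using K link_edge_iff by auto
  then have "V K - V I \<noteq> {}" by (metis card.empty zero_neq_numeral)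
  then obtain e where e: "e \<in> P" "le e K" "V e = V K - V I"
    using ex_face_with_Vb[of K "V K - V I"] KL link_subset by blast
  with card have "e \<in> edges P le" by (simp add: edges_def)
  with e rest_eqI[OF KL] show "rest P le I K \<in> edges P le" "le (rest P le I K) K"
    "V (rest P le I K) = V K - V I" by auto
qed

definition new_edges :: "'a \<Rightarrow> 'a set" where
  "new_edges X = Eb P le X - Eb P le I"

lemma finite_new_edges: "finite (new_edges X)"
  using finite_Eb by (simp add: new_edges_def)

lemma ex_new_vertex:
  assumes "e \<in> new_edges J" "J \<in> L"
  shows "\<exists>y\<in>V e. y \<notin> V I"
proof -
  have "e \<in> P" "le e J" "\<not> le e I"
    using assms by (auto simp: new_edges_def Eb_def edges_def)
  then show ?thesis
    using le_iff_Vb_subset[of e I J] base assms(2) link_iff by blast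
qed

lemma new_edges_subset:
  assumes "J \<in> L" "v \<in> Vb L le J"
  shows "new_edges v \<subseteq> Eb P le J"
proof -
  from assms(2) obtain a where "v \<in> L" "le v J" by (rule link_vertexE)
  then show ?thesis
    using Eb_mono[of P v J] assms(1) link_subset by (auto simp: new_edges_def)
qed

lemma link_vertex_unique:
  assumes J: "J \<in> L" and v: "v \<in> Vb L le J" and w: "w \<in> Vb L le J"
    and e: "e \<in> new_edges v" "e \<in> new_edges w"
  shows "v = w"
proof -
  obtain a where va: "v \<in> L" "le v J" "V v = insert a (V I)" using v by (rule link_vertexE)
  obtain b where wb: "w \<in> L" "le w J" "V w = insert b (V I)" using w by (rule link_vertexE)
  obtain y where y: "y \<in> V e" "y \<notin> V I"
    using ex_new_vertex[OF _ J] e(1) new_edges_subset[OF J v] by (auto simp: new_edges_def)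
  have "V e \<subseteq> V v" "V e \<subseteq> V w"
    using e Vb_mono[of P e] va(1) wb(1) link_subset
    by (auto simp: new_edges_def Eb_def edges_def)
  with y va(3) wb(3) have "V v = V w" by auto
  then show "v = w"
    using eq_if_Vb_eq[of v w J] va wb J link_subset by blast
qed

lemma rest_not_below_link_vertex:
  assumes K: "K \<in> edges L le" and v: "v \<in> vertices L le"
  shows "\<not> le (rest P le I K) v"
proof
  assume below: "le (rest P le I K) v"
  obtain a where vL: "v \<in> L" and a: "V v - V I = {a}"
    using v link_vertex_iff by blast
  have "rest P le I K \<in> P"
    using rest_in_edges(1)[OF K] by (simp add: edges_def)
  then have "V (rest P le I K) \<subseteq> V v"
    using Vb_mono[of P "rest P le I K" v] vL link_subset below by blast
  then have "V K - V I \<subseteq> {a}"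
    using rest_in_edges(3)[OF K] a by blast
  then have "card (V K - V I) \<le> card {a}"
    by (rule card_mono[rotated]) simp
  then show False
    using K link_edge_iff by simp
qed

lemma rest_in_new_edges:
  assumes J: "J \<in> L" and K: "K \<in> Eb L le J"
  shows "rest P le I K \<in> new_edges J"
    and "\<forall>v\<in>Vb L le J. rest P le I K \<notin> new_edges v"
proof -
  have KE: "K \<in> edges L le" and "le K J" using K by (auto simp: Eb_def)
  have KL: "K \<in> L" using KE link_edge_iff by blast
  have r: "rest P le I K \<in> edges P le" "le (rest P le I K) K" "V (rest P le I K) = V K - V I"
    using rest_in_edges[OF KE] by blast+
  have "le (rest P le I K) J"
    using le_trans[of _ K J] r(1,2) \<open>le K J\<close> KL J link_subset by (auto simp: edges_def)
  moreover have "\<not> le (rest P le I K) I"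
  proof
    assume "le (rest P le I K) I"
    then have "V K - V I \<subseteq> V I"
      using Vb_mono[of P _ I] r base by (auto simp: edges_def)
    then have "V K - V I = {}" by blast
    then show False using KE link_edge_iff by (metis card.empty zero_neq_numeral)
  qed
  ultimately show "rest P le I K \<in> new_edges J"
    using r(1) by (simp add: new_edges_def Eb_def)
  show "\<forall>v\<in>Vb L le J. rest P le I K \<notin> new_edges v"
    using rest_not_below_link_vertex[OF KE] by (auto simp: new_edges_def Eb_def Vb_def)
qed

lemma inj_on_rest:
  assumes J: "J \<in> L"
  shows "inj_on (rest P le I) (Eb L le J)"
proof
  fix K K' assume K: "K \<in> Eb L le J" and K': "K' \<in> Eb L le J"
    and eq: "rest P le I K = rest P le I K'"
  have KL: "K \<in> L" "le K J" "K' \<in> L" "le K' J"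
    using K K' link_edge_iff by (auto simp: Eb_def)
  have "V K - V I = V K' - V I"
    using rest_in_edges(3) K K' eq by (metis Eb_def mem_Collect_eq)
  then have "V K = V K'"
    using Vb_base_subset KL by blast
  then show "K = K'"
    using eq_if_Vb_eq[of K K' J] KL J link_subset by blast
qed

lemma new_edge_cases:
  assumes J: "J \<in> L" and e: "e \<in> new_edges J"
  shows "(\<exists>v\<in>Vb L le J. e \<in> new_edges v) \<or> e \<in> rest P le I ` Eb L le J"
proof -
  have eP: "e \<in> P" "le e J" "card (V e) = 2"
    using e by (auto simp: new_edges_def Eb_def edges_def)
  have JP: "J \<in> P" "V I \<subseteq> V J" using J link_iff Vb_base_subset by auto
  have eJ: "V e \<subseteq> V J" using Vb_mono[of P e J] eP JP by blast
  obtain y where y: "y \<in> V e" "y \<notin> V I"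
    using ex_new_vertex[OF e J] by blast
  then obtain x where x: "V e = {x, y}" "x \<noteq> y"
    using eP(3) by (metis card_2_iff doubleton_eq_iff insertE singletonD)
  show ?thesis
  proof (cases "x \<in> V I")
    case True
    obtain v where v: "v \<in> L" "le v J" "V v = V I \<union> {y}"
      using ex_link_face_with_Vb[OF J, of "V I \<union> {y}"] y eJ JP by blast
    then have "v \<in> Vb L le J"
      using y link_vertex_iff by (auto simp: Vb_def)
    moreover have "le e v"
      using le_iff_Vb_subset[of e v J] eP v JP link_subset x True by auto
    ultimately show ?thesis
      using e v link_subset by (auto simp: new_edges_def Eb_def)
  next
    case False
    obtain K where K: "K \<in> L" "le K J" "V K = V I \<union> V e"
      using ex_link_face_with_Vb[OF J, of "V I \<union> V e"] y eJ JP by blast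
    have new: "V K - V I = V e" using K x y False by auto
    then have "K \<in> Eb L le J"
      using K eP(3) link_edge_iff by (simp add: Eb_def)
    moreover have "le e K"
      using le_iff_Vb_subset[of e K J] eP K JP link_subset by auto
    then have "rest P le I K = e"
      using rest_eqI[OF K(1)] new e by (simp add: new_edges_def Eb_def)
    ultimately show ?thesis by blast
  qed
qed

lemma agree_on_link_face_iff:
  assumes J: "J \<in> L" and base_agree: "\<forall>e\<in>Eb P le I. c e = c' e"
  shows "(\<forall>e\<in>Eb P le J. c e = c' e) \<longleftrightarrow>
    (\<forall>v\<in>Vb L le J. \<forall>e\<in>new_edges v. c e = c' e) \<and>
    (\<forall>K\<in>Eb L le J. c (rest P le I K) = c' (rest P le I K))"
proof
  assume "\<forall>e\<in>Eb P le J. c e = c' e"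
  then show "(\<forall>v\<in>Vb L le J. \<forall>e\<in>new_edges v. c e = c' e) \<and>
    (\<forall>K\<in>Eb L le J. c (rest P le I K) = c' (rest P le I K))"
    using new_edges_subset[OF J] rest_in_new_edges(1)[OF J] unfolding new_edges_def by blast
next
  assume "(\<forall>v\<in>Vb L le J. \<forall>e\<in>new_edges v. c e = c' e) \<and>
    (\<forall>K\<in>Eb L le J. c (rest P le I K) = c' (rest P le I K))"
  then show "\<forall>e\<in>Eb P le J. c e = c' e"
    using new_edge_cases[OF J] base_agree unfolding new_edges_def by blast
qed

end

section \<open>The link in the edge inflation\<close>

locale link_inflation = sposet_link +
  fixes \<mu> :: "'a \<Rightarrow> nat" and cI :: "'a \<Rightarrow> nat"
  assumes base_labelling: "cI \<in> labellings (Eb P le I) \<mu>"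
begin

abbreviation lk_inflation where "lk_inflation \<equiv> link (inflation P le \<mu>) (inflation_le P le) (I, cI)"
abbreviation \<nu> where "\<nu> X \<equiv> \<Prod>e\<in>new_edges X. \<mu> e"
abbreviation inflated_lk where "inflated_lk \<equiv> inflation2 L le (\<lambda>K. \<mu> (rest P le I K)) \<nu>"

text \<open>Any numbering of the labellings of new_edges v by 1, ..., nu(v) will do.\<close>

definition code :: "'a \<Rightarrow> ('a \<Rightarrow> nat) \<Rightarrow> nat" where
  "code v = (SOME g. bij_betw g (labellings (new_edges v) \<mu>) {1..\<nu> v})"

definition decode :: "'a \<Rightarrow> nat \<Rightarrow> 'a \<Rightarrow> nat" where
  "decode v = the_inv_into (labellings (new_edges v) \<mu>) (code v)"

lemma bij_code: "bij_betw (code v) (labellings (new_edges v) \<mu>) {1..\<nu> v}"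
  unfolding code_def
  using someI_ex[OF ex_bij_betw_labellings_interval[OF finite_new_edges]] .

lemma code_eq_iff:
  "f \<in> labellings (new_edges v) \<mu> \<Longrightarrow> g \<in> labellings (new_edges v) \<mu> \<Longrightarrow> code v f = code v g \<longleftrightarrow> f = g"
  using bij_code[of v] by (auto simp: bij_betw_def inj_on_def)

lemma decode_inverse:
  assumes "n \<in> {1..\<nu> v}"
  shows "decode v n \<in> labellings (new_edges v) \<mu>" "code v (decode v n) = n"
  using assms bij_code[of v] unfolding decode_def
  by (auto simp: bij_betw_def the_inv_into_into f_the_inv_into_f)

definition link_map :: "'a \<times> ('a \<Rightarrow> nat) \<Rightarrow> 'a \<times> ('a \<Rightarrow> nat) \<times> ('a \<Rightarrow> nat)" where
  "link_map = (\<lambda>(J, c). (J,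
     \<lambda>v. if v \<in> Vb L le J then code v (\<lambda>e. if e \<in> new_edges v then c e else 0) else 0,
     \<lambda>K. if K \<in> Eb L le J then c (rest P le I K) else 0))"

lemma mem_lk_inflation_iff:
  "(J, c) \<in> lk_inflation \<longleftrightarrow> J \<in> L \<and> c \<in> labellings (Eb P le J) \<mu> \<and> (\<forall>e\<in>Eb P le I. c e = cI e)"
proof -
  have "(I, cI) \<in> inflation P le \<mu>"
    using base base_labelling by (simp add: mem_inflation_iff)
  moreover have "J = I \<Longrightarrow> c \<in> labellings (Eb P le J) \<mu> \<Longrightarrow> (\<forall>e\<in>Eb P le I. c e = cI e) \<Longrightarrow> c = cI"
    using labellings_eqI base_labelling by blast
  ultimately show ?thesis
    using base_labelling
    by (auto simp: link_def link_iff mem_inflation_iff inflation_le_iff)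
qed

lemma link_map_in_inflated_lk:
  assumes "(J, c) \<in> lk_inflation"
  shows "link_map (J, c) \<in> inflated_lk"
proof -
  have J: "J \<in> L" and c: "c \<in> labellings (Eb P le J) \<mu>"
    using assms mem_lk_inflation_iff by auto
  have "(\<lambda>e. if e \<in> new_edges v then c e else 0) \<in> labellings (new_edges v) \<mu>"
    if "v \<in> Vb L le J" for v
    using restriction_in_labellings[OF c new_edges_subset[OF J that]] .
  then have "code v (\<lambda>e. if e \<in> new_edges v then c e else 0) \<in> {1..\<nu> v}"
    if "v \<in> Vb L le J" for v
    using that bij_code[of v] bij_betwE by blast
  moreover have "1 \<le> c (rest P le I K) \<and> c (rest P le I K) \<le> \<mu> (rest P le I K)"
    if "K \<in> Eb L le J" for K
    using c rest_in_new_edges(1)[OF J that] by (auto simp: labellings_def new_edges_def)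
  ultimately show ?thesis
    using J by (simp add: link_map_def mem_inflation2_iff labellings_def)
qed

lemma link_map_le_iff:
  assumes x: "(J, c) \<in> lk_inflation" and y: "(J', c') \<in> lk_inflation"
  shows "inflation_le P le (J, c) (J', c') \<longleftrightarrow> inflation2_le L le (link_map (J, c)) (link_map (J', c'))"
proof (cases "le J J'")
  case False
  then show ?thesis
    by (simp add: inflation_le_def inflation2_le_def link_map_def)
next
  case True
  have J: "J \<in> L" and c: "c \<in> labellings (Eb P le J) \<mu>" and J': "J' \<in> L"
    and c': "c' \<in> labellings (Eb P le J') \<mu>"
    and base_agree: "\<forall>e\<in>Eb P le I. c e = c' e"
    using x y mem_lk_inflation_iff by auto
  have Vb_sub: "Vb L le J \<subseteq> Vb L le J'" and Eb_sub: "Eb L le J \<subseteq> Eb L le J'"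
    using Vb_mono[OF link_subset J J' True] Eb_mono[OF link_subset J J' True] .
  have restr: "(\<lambda>e. if e \<in> new_edges v then c e else 0) \<in> labellings (new_edges v) \<mu>"
    "(\<lambda>e. if e \<in> new_edges v then c' e else 0) \<in> labellings (new_edges v) \<mu>"
    if "v \<in> Vb L le J" for v
    using restriction_in_labellings c c' new_edges_subset J J' that Vb_sub by blast+
  have code_agree: "code v (\<lambda>e. if e \<in> new_edges v then c e else 0) =
      code v (\<lambda>e. if e \<in> new_edges v then c' e else 0) \<longleftrightarrow> (\<forall>e\<in>new_edges v. c e = c' e)"
    if "v \<in> Vb L le J" for v
    using code_eq_iff[OF restr[OF that]] by (auto simp: fun_eq_iff)
  obtain d ct where \<Phi>: "link_map (J, c) = (J, d, ct)"
    and d: "d \<in> labellings (Vb L le J) \<nu>" and ct: "ct \<in> labellings (Eb L le J) (\<lambda>K. \<mu> (rest P le I K))"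
    using link_map_in_inflated_lk[OF x] by (auto simp: link_map_def mem_inflation2_iff)
  have "inflation2_le L le (link_map (J, c)) (link_map (J', c')) \<longleftrightarrow>
      (\<forall>v\<in>Vb L le J. \<forall>e\<in>new_edges v. c e = c' e) \<and>
      (\<forall>K\<in>Eb L le J. c (rest P le I K) = c' (rest P le I K))"
    using inflation2_le_iff[OF d ct] \<Phi> True Vb_sub Eb_sub code_agree
    by (auto simp: link_map_def)
  also have "\<dots> \<longleftrightarrow> (\<forall>e\<in>Eb P le J. c e = c' e)"
    using agree_on_link_face_iff[OF J base_agree] by blast
  also have "\<dots> \<longleftrightarrow> inflation_le P le (J, c) (J', c')"
    using inflation_le_iff[OF c] True by blast
  finally show ?thesis ..
qed

definition preimage_labelling :: "'a \<Rightarrow> ('a \<Rightarrow> nat) \<Rightarrow> ('a \<Rightarrow> nat) \<Rightarrow> 'a \<Rightarrow> nat" where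
  "preimage_labelling J d ct e =
     (if e \<in> Eb P le I then cI e
      else if \<exists>v\<in>Vb L le J. e \<in> new_edges v then
        (let v = THE v. v \<in> Vb L le J \<and> e \<in> new_edges v in decode v (d v) e)
      else if e \<in> rest P le I ` Eb L le J then ct (the_inv_into (Eb L le J) (rest P le I) e)
      else 0)"

context
  fixes J d ct
  assumes preimage: "(J, d, ct) \<in> inflated_lk"
begin

lemma preimage_components:
  "J \<in> L" "d \<in> labellings (Vb L le J) \<nu>" "ct \<in> labellings (Eb L le J) (\<lambda>K. \<mu> (rest P le I K))"
  using preimage by (simp_all add: mem_inflation2_iff)

lemma decode_in_labellings: "v \<in> Vb L le J \<Longrightarrow> decode v (d v) \<in> labellings (new_edges v) \<mu>"
  using decode_inverse(1) preimage_components(2) by (simp add: labellings_def)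

lemma preimage_labelling_new_edge:
  assumes v: "v \<in> Vb L le J" and e: "e \<in> new_edges v"
  shows "preimage_labelling J d ct e = decode v (d v) e"
proof -
  have "(THE v. v \<in> Vb L le J \<and> e \<in> new_edges v) = v"
    using link_vertex_unique[OF preimage_components(1)] v e by blast
  with v e show ?thesis
    by (auto simp: preimage_labelling_def new_edges_def)
qed

lemma preimage_labelling_rest:
  assumes K: "K \<in> Eb L le J"
  shows "preimage_labelling J d ct (rest P le I K) = ct K"
  using rest_in_new_edges[OF preimage_components(1) K]
    the_inv_into_f_f[OF inj_on_rest[OF preimage_components(1)] K] K
  by (auto simp: preimage_labelling_def new_edges_def)

lemma preimage_labelling_in_lk_inflation: "(J, preimage_labelling J d ct) \<in> lk_inflation"
proof -
  have J: "J \<in> L" using preimage_components(1) .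
  have base_sub: "Eb P le I \<subseteq> Eb P le J"
    using Eb_mono[of P I J] base J link_iff by blast
  have "1 \<le> preimage_labelling J d ct e \<and> preimage_labelling J d ct e \<le> \<mu> e"
    if e: "e \<in> Eb P le J" for e
  proof (cases "e \<in> Eb P le I")
    case True
    then show ?thesis
      using base_labelling by (simp add: preimage_labelling_def labellings_def)
  next
    case False
    with e have "e \<in> new_edges J" by (simp add: new_edges_def)
    then consider v where "v \<in> Vb L le J" "e \<in> new_edges v"
      | K where "K \<in> Eb L le J" "e = rest P le I K"
      using new_edge_cases[OF J] by blast
    then show ?thesis
    proof cases
      case 1
      then show ?thesis
        using preimage_labelling_new_edge decode_in_labellings by (auto simp: labellings_def)
    next
      case 2
      then show ?thesis
        using preimage_labelling_rest preimage_components(3) by (auto simp: labellings_def)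
    qed
  qed
  moreover have "preimage_labelling J d ct e = 0" if e: "e \<notin> Eb P le J" for e
    using e base_sub new_edges_subset[OF J] rest_in_new_edges(1)[OF J]
    by (auto simp: preimage_labelling_def new_edges_def)
  ultimately show ?thesis
    using J base_sub by (auto simp: mem_lk_inflation_iff labellings_def preimage_labelling_def)
qed

lemma link_map_preimage_labelling: "link_map (J, preimage_labelling J d ct) = (J, d, ct)"
proof -
  have "code v (\<lambda>e. if e \<in> new_edges v then preimage_labelling J d ct e else 0) = d v"
    if v: "v \<in> Vb L le J" for v
  proof -
    have "(\<lambda>e. if e \<in> new_edges v then preimage_labelling J d ct e else 0) = decode v (d v)"
      using preimage_labelling_new_edge[OF v] decode_in_labellings[OF v]
      by (auto simp: fun_eq_iff labellings_def)
    then show ?thesis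
      using decode_inverse(2) preimage_components(2) v by (simp add: labellings_def)
  qed
  then show ?thesis
    using preimage_components preimage_labelling_rest
    by (auto simp: link_map_def labellings_def fun_eq_iff)
qed

end

lemma bij_betw_link_map: "bij_betw link_map lk_inflation inflated_lk"
proof (rule bij_betw_imageI)
  show "inj_on link_map lk_inflation"
  proof
    fix x y
    assume "x \<in> lk_inflation" "y \<in> lk_inflation" "link_map x = link_map y"
    moreover obtain J c J' c' where xy: "x = (J, c)" "y = (J', c')" by fastforce
    ultimately have x: "(J, c) \<in> lk_inflation" and y: "(J', c') \<in> lk_inflation"
      and eq: "link_map (J, c) = link_map (J', c')" by simp_all
    have "J = J'" using eq by (simp add: link_map_def)
    have "inflation2_le L le (link_map (J', c')) (link_map (J', c'))"
      using link_map_in_inflated_lk[OF y] le_refl link_subset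
      by (auto simp: link_map_def inflation2_le_def mem_inflation2_iff labellings_def fun_eq_iff)
    then have "inflation_le P le (J, c) (J', c')"
      using link_map_le_iff[OF x y] eq by simp
    then show "x = y"
      using xy x y \<open>J = J'\<close> labellings_eqI by (auto simp: mem_lk_inflation_iff inflation_le_iff)
  qed
  show "link_map ` lk_inflation = inflated_lk"
  proof
    show "link_map ` lk_inflation \<subseteq> inflated_lk"
      using link_map_in_inflated_lk by auto
    show "inflated_lk \<subseteq> link_map ` lk_inflation"
    proof
      fix z assume "z \<in> inflated_lk"
      moreover obtain J d ct where "z = (J, d, ct)" by (cases z)
      ultimately show "z \<in> link_map ` lk_inflation"
        using link_map_preimage_labelling preimage_labelling_in_lk_inflation by (metis image_eqI)
    qed
  qed
qed

theorem poset_iso_link_inflation: "poset_iso lk_inflation (inflation_le P le) inflated_lk (inflation2_le L le)"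
  unfolding poset_iso_def using bij_betw_link_map link_map_le_iff by fast

end

theorem lemma5p6:
  fixes P :: "'a set" and le :: "'a \<Rightarrow> 'a \<Rightarrow> bool"
    and \<mu> :: "'a \<Rightarrow> nat" and I :: 'a and cI :: "'a \<Rightarrow> nat"
  assumes "simplicial_poset P le"
    and "\<forall>e \<in> edges P le. 0 < \<mu> e"
    and "I \<in> P"
    and "\<forall>e \<in> Eb P le I. 1 \<le> cI e \<and> cI e \<le> \<mu> e"
    and "\<forall>e. e \<notin> Eb P le I \<longrightarrow> cI e = 0"
  shows "poset_iso
           (link (inflation P le \<mu>) (inflation_le P le) (I, cI)) (inflation_le P le)
           (inflation2 (link P le I) le
              (\<lambda>J. \<mu> (rest P le I J))
              (\<lambda>J. \<Prod>e \<in> Eb P le J - Eb P le I. \<mu> e))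
           (inflation2_le (link P le I) le)"
proof -
  interpret link_inflation P le I \<mu> cI
    using assms(1,3-5) by unfold_locales (simp_all add: labellings_def)
  show ?thesis
    using poset_iso_link_inflation by (simp add: new_edges_def)
qed

end
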